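(* Let $(W,\bar W)$ be a solution of the $q$-Sato equation (see context). For a constant $\lambda\in\mathbb{C}^\times$ and constant diagonal matrices $D(\alpha)=\mathrm{diag}[\alpha_1,\dots,\alpha_N]$, $D(\beta)=\mathrm{diag}[\beta_1,\dots,\beta_N]$, define $$W_\lambda(\Lambda;s,\underline{x})=\lambda^{s+D(\alpha)}\circ W(\Lambda;s,\underline{x}_\lambda)\circ\lambda^{-s-D(\alpha)},\qquad \bar W_\lambda(\Lambda;s,\underline{x})=\lambda^{s+D(\alpha)}\circ\bar W(\Lambda;s,\underline{x}_\lambda)\circ\lambda^{-s-D(\beta)},$$ where $\underline{x}_\lambda=\{\lambda^nx_n^{(k)}\ (n\ge1,\ k=1,\dots,N)\}$ and $\lambda^{\pm(s+D(\alpha))}$ denotes the operator of multiplication by $\mathrm{diag}[\lambda^{\pm(s+\alpha_1)},\dots,\lambda^{\pm(s+\alpha_N)}]$ (similarly for $\beta$). Then $(W_\lambda,\bar W_\lambda)$ is also a solution of the $q$-Sato equation.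
   Context: Fix $q\in\mathbb{C}$ with $|q|>1$ and $N\ge1$. Let $s\in\mathbb{Z}$ be a discrete variable and $\underline{x}=\{x_n^{(k)}: n\ge1,\ k=1,\dots,N\}$ continuous variables. $\Lambda$ is the shift operator $\Lambda f(s)=f(s+1)$; $T_q(x_n^{(k)})$ is the $q$-shift $x_n^{(k)}\mapsto qx_n^{(k)}$, and $\mathcal{D}_q(x)f(x)=(f(x)-f(qx))/x$; these act on operators coefficientwise. $I_k=[\delta_{ij}\delta_{ik}]_{1\le i,j\le N}$. The Sato–Wilson operators are $W(\Lambda;s,\underline{x})=I+\sum_{i\ge1}W_i(s;\underline{x})\Lambda^{-i}$ and $\bar W(\Lambda;s,\underline{x})=\sum_{j\ge0}\bar W_j(s;\underline{x})\Lambda^j$, with $N\times N$ matrix coefficients and $\bar W_0$ invertible. For $A=\sum_nA_n\Lambda^n$ put $[A]_{\ge0}=\sum_{n\ge0}A_n\Lambda^n$. The $q$-Sato equation: for all $n\ge1$, $k=1,\dots,N$ and $\widetilde W\in\{W,\bar W\}$, $$\mathcal{D}_q(x_n^{(k)})\widetilde W=\Big[\big(T_q(x_n^{(k)})W\big)I_k\Lambda^nW^{-1}\Big]_{\ge0}\widetilde W-\big(T_q(x_n^{(k)})\widetilde W\big)I_k\Lambda^n.$$ *)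

theory Defs
  imports "HOL-Analysis.Analysis"
begin

text \<open>
The size N is the cardinality of the finite index type 'n.
An operator A = sum_j A_j(s) Lambda^j is represented by its coefficient function:
A j s is the coefficient of Lambda^j, evaluated at the discrete variable s.
The continuous variables x_n^(k) are a function x :: nat => 'n => complex
(x n k = x_n^(k); the entries x 0 k are unused dummies).
\<close>

type_synonym 'n mop = "int \<Rightarrow> int \<Rightarrow> complex^'n^'n"
type_synonym 'n xvars = "nat \<Rightarrow> 'n \<Rightarrow> complex"

text \<open>Composition: (a_i Lambda^i)(b_j Lambda^j) = a_i(s) b_j(s+i) Lambda^(i+j).
The sum is over the (finite, for all products used) set of contributing indices.\<close>
definition op_mult :: "'n::finite mop \<Rightarrow> 'n mop \<Rightarrow> 'n mop" where
  "op_mult A B = (\<lambda>m s. \<Sum>i\<in>{i. A i s \<noteq> 0 \<and> B (m - i) (s + i) \<noteq> 0}. A i s ** B (m - i) (s + i))"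

definition op_one :: "'n::finite mop" where
  "op_one = (\<lambda>j s. if j = 0 then mat 1 else 0)"

definition op_Lam :: "int \<Rightarrow> 'n::finite mop" where
  "op_Lam n = (\<lambda>j s. if j = n then mat 1 else 0)"

definition op_mul_fun :: "(int \<Rightarrow> complex^'n^'n) \<Rightarrow> 'n::finite mop" where
  "op_mul_fun f = (\<lambda>j s. if j = 0 then f s else 0)"

definition Imat :: "'n::finite \<Rightarrow> complex^'n^'n" where
  "Imat k = (\<chi> a b. if a = k \<and> b = k then 1 else 0)"

definition op_pos :: "'n::finite mop \<Rightarrow> 'n mop" where
  "op_pos A = (\<lambda>j s. if j \<ge> 0 then A j s else 0)"

definition bounded_above :: "'n::finite mop \<Rightarrow> bool" where
  "bounded_above A \<longleftrightarrow> (\<exists>M. \<forall>j s. j > M \<longrightarrow> A j s = 0)"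

definition op_inv :: "'n::finite mop \<Rightarrow> 'n mop" where
  "op_inv A = (THE V. bounded_above V \<and> op_mult A V = op_one \<and> op_mult V A = op_one)"

definition Tq :: "complex \<Rightarrow> nat \<Rightarrow> 'n \<Rightarrow> 'n xvars \<Rightarrow> 'n xvars" where
  "Tq q n k x = x(n := (x n)(k := q * x n k))"

definition Dq :: "complex \<Rightarrow> nat \<Rightarrow> 'n::finite \<Rightarrow> ('n xvars \<Rightarrow> 'n mop) \<Rightarrow> 'n xvars \<Rightarrow> 'n mop" where
  "Dq q n k F x = (\<lambda>j s. mat (1 / x n k) ** (F x j s - F (Tq q n k x) j s))"

text \<open>The q-Sato equation for the pair (W, Wb), including the shape requirements on the
Sato-Wilson operators. D_q(x_n^(k)) is only defined where x_n^(k) is nonzero.\<close>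
definition qsato_solution :: "complex \<Rightarrow> ('n::finite xvars \<Rightarrow> 'n mop) \<Rightarrow> ('n xvars \<Rightarrow> 'n mop) \<Rightarrow> bool" where
  "qsato_solution q W Wb \<longleftrightarrow>
     (\<forall>x s. W x 0 s = mat 1 \<and> (\<forall>j > 0. W x j s = 0)) \<and>
     (\<forall>x s. (\<forall>j < 0. Wb x j s = 0) \<and> invertible (Wb x 0 s)) \<and>
     (\<forall>n \<ge> 1. \<forall>k x. x n k \<noteq> 0 \<longrightarrow>
        (\<forall>Wt \<in> {W, Wb}.
           Dq q n k Wt x =
             (\<lambda>j s. op_mult (op_pos (op_mult (op_mult (W (Tq q n k x)) (op_mult (op_mul_fun (\<lambda>_. Imat k)) (op_Lam (int n))))
                                             (op_inv (W x))))
                            (Wt x) j s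
                    - op_mult (Wt (Tq q n k x)) (op_mult (op_mul_fun (\<lambda>_. Imat k)) (op_Lam (int n))) j s)))"

text \<open>lambda^{s + D(alpha)} and its negative: diag[lambda^{s+alpha_i}] (principal branch powr)\<close>
definition lam_pow_diag :: "complex \<Rightarrow> complex^'n \<Rightarrow> int \<Rightarrow> complex^'n^'n::finite" where
  "lam_pow_diag lam a s = (\<chi> i j. if i = j then lam powr (of_int s + a $ i) else 0)"

definition lam_pow_diag_neg :: "complex \<Rightarrow> complex^'n \<Rightarrow> int \<Rightarrow> complex^'n^'n::finite" where
  "lam_pow_diag_neg lam a s = (\<chi> i j. if i = j then lam powr (- (of_int s + a $ i)) else 0)"

definition xscale :: "complex \<Rightarrow> 'n xvars \<Rightarrow> 'n xvars" where
  "xscale lam x = (\<lambda>n k. lam ^ n * x n k)"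


definition gauge :: "complex \<Rightarrow> complex^'n \<Rightarrow> complex^'n \<Rightarrow> ('n::finite xvars \<Rightarrow> 'n mop) \<Rightarrow> ('n xvars \<Rightarrow> 'n mop)" where
  "gauge lam a b F = (\<lambda>x. op_mult (op_mult (op_mul_fun (lam_pow_diag lam a)) (F (xscale lam x)))
                                  (op_mul_fun (lam_pow_diag_neg lam b)))"

end

theory Submission
  imports Defs
begin

text \<open>
Conjugation by multiplication operators commutes with composition, with the
projection [_]_>=0 and with inversion of W, so both sides of the q-Sato equation for the new
pair are the conjugates of the corresponding sides for the old pair at x_lambda, up to the same
factor lambda^n: on the left it comes from 1/x_n^(k) = lambda^n / (lambda^n x_n^(k)), on the
right from lambda^(s+D) I_k Lambda^n lambda^(-s-D) = lambda^(-n) I_k Lambda^n.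
\<close>

lemma mat_mult_left: "mat c ** A = (\<chi> i j. c * A $ i $ j)"
  unfolding matrix_matrix_mult_def mat_def
  by (auto simp: if_distrib if_distribR sum.delta'[OF finite] cong: if_cong)

lemma mat_mult_right: "A ** mat c = (\<chi> i j. A $ i $ j * c)"
  unfolding matrix_matrix_mult_def mat_def
  by (auto simp: if_distrib if_distribR sum.delta'[OF finite] cong: if_cong)

lemma mat_mult_commute: "mat c ** A = A ** (mat c :: 'a::comm_semiring_1^'n^'n)"
  by (simp add: mat_mult_left mat_mult_right mult.commute)

lemma matrix_diff_ldistrib: "(A :: 'a::ring_1^'n^'m) ** (B - C) = A ** B - A ** C"
  by (vector matrix_matrix_mult_def sum_subtractf right_diff_distrib)

lemma matrix_diff_rdistrib: "(B - C) ** (A :: 'a::ring_1^'n^'m) = B ** A - C ** A"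
  by (vector matrix_matrix_mult_def sum_subtractf left_diff_distrib)

lemma matrix_sandwich_eq_0_iff:
  assumes "L' ** L = mat 1" and "R ** R' = mat 1"
  shows "L ** X ** R = 0 \<longleftrightarrow> X = (0 :: 'a::semiring_1^'n^'n)"
proof
  assume "L ** X ** R = 0"
  moreover have "L' ** (L ** X ** R) ** R' = (L' ** L) ** X ** (R ** R')"
    by (simp add: matrix_mul_assoc)
  ultimately show "X = 0"
    using assms by simp
qed simp

definition diag_mat :: "('n \<Rightarrow> 'a::zero) \<Rightarrow> 'a^'n^'n" where
  "diag_mat f = (\<chi> i j. if i = j then f i else 0)"

lemma diag_mat_mult: "diag_mat f ** diag_mat g = diag_mat (\<lambda>i. f i * g i :: 'a::semiring_1)"
proof -
  have "(diag_mat f ** diag_mat g) $ i $ j = (\<Sum>k\<in>UNIV. (if i = k then f i else 0) * (if k = j then g k else 0))" for i j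
    by (simp add: matrix_matrix_mult_def diag_mat_def)
  also have "\<dots> i j = (\<Sum>k\<in>UNIV. if k = i then (if i = j then f i * g i else 0) else 0)" for i j
    by (rule sum.cong) auto
  finally show ?thesis
    by (simp add: vec_eq_iff diag_mat_def)
qed

lemma mat_eq_diag_mat: "mat c = diag_mat (\<lambda>_. c)"
  by (simp add: mat_def diag_mat_def)

lemma invertible_mat:
  assumes "c \<noteq> 0"
  shows "invertible (mat c :: 'a::field^'n^'n)"
proof -
  have "mat c ** mat (inverse c) = (mat 1 :: 'a^'n^'n)" "mat (inverse c) ** mat c = (mat 1 :: 'a^'n^'n)"
    using assms by (simp_all add: mat_eq_diag_mat diag_mat_mult)
  then show ?thesis
    unfolding invertible_def by blast
qed

lemma mat_mult_mat: "mat a ** mat b = (mat (a * b) :: 'a::semiring_1^'n^'n)"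
  by (simp add: mat_eq_diag_mat diag_mat_mult)

lemma matrix_add_rdistrib: "(B + C) ** A = B ** A + C ** A"
  by (vector matrix_matrix_mult_def sum.distrib[symmetric] field_simps)

lemma matrix_mult_sum_left: "A ** sum f S = (\<Sum>i\<in>S. A ** f i)"
  by (induction S rule: infinite_finite_induct) (simp_all add: matrix_add_ldistrib)

lemma matrix_sum_mult_right: "sum f S ** A = (\<Sum>i\<in>S. f i ** A)"
  by (induction S rule: infinite_finite_induct) (simp_all add: matrix_add_rdistrib)

section \<open>Composition of difference operators\<close>

lemma op_mult_eq_sum:
  assumes "finite F" and "\<And>i. A i s \<noteq> 0 \<Longrightarrow> B (m - i) (s + i) \<noteq> 0 \<Longrightarrow> i \<in> F"
  shows "op_mult A B m s = (\<Sum>i\<in>F. A i s ** B (m - i) (s + i))"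
  unfolding op_mult_def using assms by (intro sum.mono_neutral_left) auto

lemma op_mult_eq_0_above:
  assumes "\<And>j s. a < j \<Longrightarrow> A j s = 0" and "\<And>j s. b < j \<Longrightarrow> B j s = 0" and "a + b < m"
  shows "op_mult A B m s = 0"
proof -
  have "A i s = 0 \<or> B (m - i) (s + i) = 0" for i
    using assms(1)[of i s] assms(2)[of "m - i" "s + i"] assms(3) by linarith
  then have no_terms: "{i. A i s \<noteq> 0 \<and> B (m - i) (s + i) \<noteq> 0} = {}"
    by blast
  show ?thesis
    unfolding op_mult_def no_terms by simp
qed

text \<open>The support summed over in op_mult is in general infinite, and the sum is then 0;
bounding all degrees from above makes every support involved a finite interval.\<close>
lemma op_mult_assoc:
  assumes "bounded_above A" "bounded_above B" "bounded_above C"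
  shows "op_mult (op_mult A B) C = op_mult A (op_mult B C)"
proof (intro ext)
  fix m s
  obtain a b c where "\<forall>j s. a < j \<longrightarrow> A j s = 0" "\<forall>j s. b < j \<longrightarrow> B j s = 0"
    "\<forall>j s. c < j \<longrightarrow> C j s = 0"
    using assms unfolding bounded_above_def by blast
  then obtain M where A: "\<And>j s. M < j \<Longrightarrow> A j s = 0" and B: "\<And>j s. M < j \<Longrightarrow> B j s = 0"
    and C: "\<And>j s. M < j \<Longrightarrow> C j s = 0"
    by (metis max.strict_boundedE)
  define I where "I = {m - 2 * M..M}"
  define J where "J = {m - M..2 * M}"
  have AB: "op_mult A B j s = (\<Sum>i\<in>I. A i s ** B (j - i) (s + i))" if "j \<in> J" for j
    using that A B by (intro op_mult_eq_sum) (auto simp: I_def J_def not_less[symmetric])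
  have BC: "op_mult B C (m - i) (s + i) = (\<Sum>j\<in>J. B (j - i) (s + i) ** C (m - j) (s + j))"
    if "i \<in> I" for i
  proof -
    have "op_mult B C (m - i) (s + i) = (\<Sum>k\<in>(\<lambda>j. j - i) ` J. B k (s + i) ** C (m - i - k) (s + i + k))"
    proof (rule op_mult_eq_sum)
      fix k assume "B k (s + i) \<noteq> 0" "C (m - i - k) (s + i + k) \<noteq> 0"
      then have "k \<le> M" "m - i - k \<le> M"
        using B C not_less by blast+
      then have "k + i \<in> J"
        using \<open>i \<in> I\<close> by (simp add: I_def J_def)
      then show "k \<in> (\<lambda>j. j - i) ` J"
        by (rule rev_image_eqI) simp
    qed (simp add: J_def)
    also have "\<dots> = (\<Sum>j\<in>J. B (j - i) (s + i) ** C (m - i - (j - i)) (s + i + (j - i)))"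
      by (subst sum.reindex) (simp_all add: inj_on_def)
    finally show ?thesis
      by simp
  qed
  have "op_mult (op_mult A B) C m s = (\<Sum>j\<in>J. op_mult A B j s ** C (m - j) (s + j))"
  proof (rule op_mult_eq_sum)
    fix j assume "op_mult A B j s \<noteq> 0" "C (m - j) (s + j) \<noteq> 0"
    then have "\<not> M + M < j" "\<not> M < m - j"
      using op_mult_eq_0_above[of M A M B j s] A B C by blast+
    then show "j \<in> J"
      by (simp add: J_def)
  qed (simp add: J_def)
  also have "\<dots> = (\<Sum>j\<in>J. \<Sum>i\<in>I. A i s ** B (j - i) (s + i) ** C (m - j) (s + j))"
    by (rule sum.cong) (simp_all add: AB matrix_sum_mult_right)
  also have "\<dots> = (\<Sum>i\<in>I. \<Sum>j\<in>J. A i s ** B (j - i) (s + i) ** C (m - j) (s + j))"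
    by (rule sum.swap)
  also have "\<dots> = (\<Sum>i\<in>I. A i s ** op_mult B C (m - i) (s + i))"
    by (rule sum.cong) (simp_all add: BC matrix_mult_sum_left matrix_mul_assoc)
  also have "\<dots> = op_mult A (op_mult B C) m s"
  proof (rule op_mult_eq_sum[symmetric])
    fix i assume "A i s \<noteq> 0" "op_mult B C (m - i) (s + i) \<noteq> 0"
    then have "\<not> M < i" "\<not> M + M < m - i"
      using op_mult_eq_0_above[of M B M C "m - i" "s + i"] A B C by blast+
    then show "i \<in> I"
      by (simp add: I_def)
  qed (simp add: I_def)
  finally show "op_mult (op_mult A B) C m s = op_mult A (op_mult B C) m s" .
qed

lemma op_mult_one_left: "op_mult op_one A = A"
proof (intro ext)
  fix m s
  have "op_mult op_one A m s = (\<Sum>i\<in>{0}. op_one i s ** A (m - i) (s + i))"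
    by (rule op_mult_eq_sum) (auto simp: op_one_def split: if_splits)
  then show "op_mult op_one A m s = A m s"
    by (simp add: op_one_def)
qed

lemma op_mult_one_right: "op_mult A op_one = A"
proof (intro ext)
  fix m s
  have "op_mult A op_one m s = (\<Sum>i\<in>{m}. A i s ** op_one (m - i) (s + i))"
    by (rule op_mult_eq_sum) (auto simp: op_one_def split: if_splits)
  then show "op_mult A op_one m s = A m s"
    by (simp add: op_one_def)
qed

lemma op_inv_eqI:
  assumes "bounded_above A" "bounded_above V"
    and "op_mult A V = op_one" "op_mult V A = op_one"
  shows "op_inv A = V"
  unfolding op_inv_def
proof (rule the_equality)
  fix V' assume V': "bounded_above V' \<and> op_mult A V' = op_one \<and> op_mult V' A = op_one"
  have "V' = op_mult V' (op_mult A V)"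
    using assms by (simp add: op_mult_one_right)
  also have "\<dots> = op_mult (op_mult V' A) V"
    by (rule op_mult_assoc[symmetric]) (use V' assms in auto)
  finally show "V' = V"
    using V' by (simp add: op_mult_one_left)
qed (use assms in blast)

section \<open>Inverse of a lower unitriangular operator\<close>

definition lower_unitriangular :: "'n::finite mop \<Rightarrow> bool" where
  "lower_unitriangular A \<longleftrightarrow> (\<forall>s. A 0 s = mat 1) \<and> (\<forall>j s. 0 < j \<longrightarrow> A j s = 0)"

lemma lower_unitriangular_bounded_above: "lower_unitriangular A \<Longrightarrow> bounded_above A"
  unfolding lower_unitriangular_def bounded_above_def by blast

function lower_unitriangular_inverse :: "'n::finite mop \<Rightarrow> 'n mop" where
  "lower_unitriangular_inverse W m s =
     (if 0 < m then 0 else if m = 0 then mat 1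
      else - (\<Sum>i\<in>{m..-1}. W i s ** lower_unitriangular_inverse W (m - i) (s + i)))"
  by auto
termination
  by (relation "Wellfounded.measure (\<lambda>(W, m, s). nat (- m))") auto

declare lower_unitriangular_inverse.simps [simp del]

lemma lower_unitriangular_inverse_lower_unitriangular:
  "lower_unitriangular (lower_unitriangular_inverse W)"
  unfolding lower_unitriangular_def by (auto simp: lower_unitriangular_inverse.simps)

lemma lower_unitriangular_mult_inverse:
  assumes "lower_unitriangular W"
  shows "op_mult W (lower_unitriangular_inverse W) = op_one"
proof (intro ext)
  fix m s
  let ?V = "lower_unitriangular_inverse W"
  have sum_eq: "op_mult W ?V m s = (\<Sum>i\<in>{m..0}. W i s ** ?V (m - i) (s + i))"
    using assms lower_unitriangular_inverse_lower_unitriangular[of W]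
    by (intro op_mult_eq_sum) (auto simp: lower_unitriangular_def not_less[symmetric])
  consider "0 < m" | "m = 0" | "m < 0"
    by linarith
  then show "op_mult W ?V m s = op_one m s"
  proof cases
    case 1
    then show ?thesis
      by (simp add: sum_eq op_one_def)
  next
    case 2
    then show ?thesis
      using assms sum_eq by (simp add: op_one_def lower_unitriangular_def lower_unitriangular_inverse.simps)
  next
    case 3
    then have "{m..0} = insert 0 {m..-1}"
      by auto
    then have "op_mult W ?V m s = ?V m s + (\<Sum>i\<in>{m..-1}. W i s ** ?V (m - i) (s + i))"
      using assms by (simp add: sum_eq lower_unitriangular_def)
    also have "\<dots> = 0"
      using 3 by (subst (1) lower_unitriangular_inverse.simps) simp
    finally show ?thesis
      using 3 by (simp add: op_one_def)
  qed
qed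

text \<open>The right inverse of the right inverse is W itself, so it is also a left inverse.\<close>
lemma lower_unitriangular_inverse_mult:
  assumes "lower_unitriangular W"
  shows "op_mult (lower_unitriangular_inverse W) W = op_one"
proof -
  let ?V = "lower_unitriangular_inverse W"
  let ?V' = "lower_unitriangular_inverse ?V"
  have V: "lower_unitriangular ?V" "lower_unitriangular ?V'"
    by (rule lower_unitriangular_inverse_lower_unitriangular)+
  have "W = op_mult W (op_mult ?V ?V')"
    using lower_unitriangular_mult_inverse[OF V(1)] by (simp add: op_mult_one_right)
  also have "\<dots> = ?V'"
    using assms V lower_unitriangular_mult_inverse[OF assms]
    by (simp add: op_mult_assoc[symmetric] lower_unitriangular_bounded_above op_mult_one_left)
  finally show ?thesis
    using lower_unitriangular_mult_inverse[OF V(1)] by simp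
qed

lemma op_inv_lower_unitriangular:
  assumes "lower_unitriangular W"
  shows "op_inv W = lower_unitriangular_inverse W"
  using assms lower_unitriangular_inverse_lower_unitriangular[of W]
  by (intro op_inv_eqI lower_unitriangular_mult_inverse lower_unitriangular_inverse_mult)
    (simp_all add: lower_unitriangular_bounded_above)

section \<open>Conjugation by multiplication operators\<close>

definition op_sandwich :: "(int \<Rightarrow> complex^'n^'n) \<Rightarrow> (int \<Rightarrow> complex^'n^'n) \<Rightarrow> 'n::finite mop \<Rightarrow> 'n mop" where
  "op_sandwich L R A = (\<lambda>j s. L s ** A j s ** R (s + j))"

lemma op_mult_mul_fun_left: "op_mult (op_mul_fun f) A m s = f s ** A m s"
proof -
  have "op_mult (op_mul_fun f) A m s = (\<Sum>i\<in>{0}. op_mul_fun f i s ** A (m - i) (s + i))"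
    by (rule op_mult_eq_sum) (auto simp: op_mul_fun_def split: if_splits)
  then show ?thesis
    by (simp add: op_mul_fun_def)
qed

lemma op_mult_mul_fun_right: "op_mult A (op_mul_fun g) m s = A m s ** g (s + m)"
proof -
  have "op_mult A (op_mul_fun g) m s = (\<Sum>i\<in>{m}. A i s ** op_mul_fun g (m - i) (s + i))"
    by (rule op_mult_eq_sum) (auto simp: op_mul_fun_def split: if_splits)
  then show ?thesis
    by (simp add: op_mul_fun_def)
qed

lemma op_sandwich_eq_op_mult: "op_sandwich L R A = op_mult (op_mult (op_mul_fun L) A) (op_mul_fun R)"
  by (simp add: op_sandwich_def fun_eq_iff op_mult_mul_fun_left op_mult_mul_fun_right)

lemma op_sandwich_mult:
  assumes L: "\<And>s. invertible (L s)" and M: "\<And>t. M t ** M' t = mat 1" and R: "\<And>t. invertible (R t)"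
  shows "op_mult (op_sandwich L M A) (op_sandwich M' R B) = op_sandwich L R (op_mult A B)"
proof (intro ext)
  fix m s
  obtain L' R' where L': "L' ** L s = mat 1" and R': "R (s + m) ** R' = mat 1"
    using L R unfolding invertible_def by blast
  have "op_sandwich L M A i s = 0 \<longleftrightarrow> A i s = 0" for i
    using matrix_sandwich_eq_0_iff[OF L' M] by (simp add: op_sandwich_def)
  moreover have "op_sandwich M' R B (m - i) (s + i) = 0 \<longleftrightarrow> B (m - i) (s + i) = 0" for i
    using matrix_sandwich_eq_0_iff[OF M R'] by (simp add: op_sandwich_def)
  ultimately have terms: "{i. op_sandwich L M A i s \<noteq> 0 \<and> op_sandwich M' R B (m - i) (s + i) \<noteq> 0}
      = {i. A i s \<noteq> 0 \<and> B (m - i) (s + i) \<noteq> 0}"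
    by blast
  have "op_sandwich L M A i s ** op_sandwich M' R B (m - i) (s + i)
      = L s ** A i s ** (M (s + i) ** M' (s + i)) ** B (m - i) (s + i) ** R (s + m)" for i
    by (simp add: op_sandwich_def matrix_mul_assoc)
  then have "op_sandwich L M A i s ** op_sandwich M' R B (m - i) (s + i)
      = L s ** (A i s ** B (m - i) (s + i)) ** R (s + m)" for i
    by (simp add: M matrix_mul_assoc)
  then show "op_mult (op_sandwich L M A) (op_sandwich M' R B) m s = op_sandwich L R (op_mult A B) m s"
    unfolding op_mult_def terms
    by (simp add: op_sandwich_def matrix_mult_sum_left matrix_sum_mult_right)
qed

lemma op_sandwich_scalar: "op_sandwich L (\<lambda>t. mat c ** R t) A = op_sandwich (\<lambda>s. mat c ** L s) R A"
proof -
  have "L s ** A j s ** (mat c ** R t) = mat c ** L s ** A j s ** R t" for s j t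
    by (simp add: matrix_mul_assoc mat_mult_commute[of c "L s ** A j s", symmetric])
  then show ?thesis
    by (simp add: op_sandwich_def fun_eq_iff)
qed

lemma op_pos_sandwich: "op_pos (op_sandwich L R A) = op_sandwich L R (op_pos A)"
  by (simp add: op_pos_def op_sandwich_def fun_eq_iff)

lemma op_sandwich_diff: "op_sandwich L R (A - B) = op_sandwich L R A - op_sandwich L R B"
  by (simp add: op_sandwich_def fun_eq_iff matrix_diff_ldistrib matrix_diff_rdistrib)

lemma bounded_above_sandwich: "bounded_above A \<Longrightarrow> bounded_above (op_sandwich L R A)"
proof -
  assume "bounded_above A"
  then obtain M where "\<forall>j s. M < j \<longrightarrow> A j s = 0"
    unfolding bounded_above_def by blast
  then have "\<forall>j s. M < j \<longrightarrow> op_sandwich L R A j s = 0"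
    by (simp add: op_sandwich_def)
  then show ?thesis
    unfolding bounded_above_def by blast
qed

lemma lower_unitriangular_sandwich:
  assumes "\<And>s. L s ** R s = mat 1" and "lower_unitriangular A"
  shows "lower_unitriangular (op_sandwich L R A)"
  using assms unfolding lower_unitriangular_def op_sandwich_def by simp

lemma op_sandwich_one:
  assumes "\<And>s. L s ** R s = mat 1"
  shows "op_sandwich L R op_one = op_one"
  using assms by (simp add: op_sandwich_def op_one_def fun_eq_iff)

lemma op_inv_sandwich:
  assumes LR: "\<And>s. L s ** R s = mat 1" and RL: "\<And>s. R s ** L s = mat 1"
    and A: "lower_unitriangular A"
  shows "op_inv (op_sandwich L R A) = op_sandwich L R (op_inv A)"
proof (rule op_inv_eqI)
  have inv: "invertible (L s)" "invertible (R s)" for s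
    using LR RL unfolding invertible_def by blast+
  let ?V = "lower_unitriangular_inverse A"
  have V: "op_inv A = ?V" "lower_unitriangular ?V"
    using A by (simp_all add: op_inv_lower_unitriangular lower_unitriangular_inverse_lower_unitriangular)
  show "bounded_above (op_sandwich L R A)" "bounded_above (op_sandwich L R (op_inv A))"
    using A V by (simp_all add: bounded_above_sandwich lower_unitriangular_bounded_above)
  show "op_mult (op_sandwich L R A) (op_sandwich L R (op_inv A)) = op_one"
    using A V op_sandwich_mult[OF inv(1) RL inv(2)]
    by (simp add: lower_unitriangular_mult_inverse op_sandwich_one[OF LR])
  show "op_mult (op_sandwich L R (op_inv A)) (op_sandwich L R A) = op_one"
    using A V op_sandwich_mult[OF inv(1) RL inv(2)]
    by (simp add: lower_unitriangular_inverse_mult op_sandwich_one[OF LR])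
qed

section \<open>The gauge transformation\<close>

lemma lam_pow_diag_eq_diag_mat: "lam_pow_diag lam a s = diag_mat (\<lambda>i. lam powr (of_int s + a $ i))"
  by (simp add: lam_pow_diag_def diag_mat_def)

lemma lam_pow_diag_neg_eq_diag_mat: "lam_pow_diag_neg lam a s = diag_mat (\<lambda>i. lam powr - (of_int s + a $ i))"
  unfolding lam_pow_diag_neg_def diag_mat_def ..

lemma lam_pow_diag_mult_neg:
  assumes "lam \<noteq> 0"
  shows "lam_pow_diag lam a s ** lam_pow_diag_neg lam a s = mat 1"
  unfolding lam_pow_diag_eq_diag_mat lam_pow_diag_neg_eq_diag_mat diag_mat_mult powr_minus
  using assms by (simp add: mat_eq_diag_mat)

lemma lam_pow_diag_neg_mult:
  assumes "lam \<noteq> 0"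
  shows "lam_pow_diag_neg lam a s ** lam_pow_diag lam a s = mat 1"
  unfolding lam_pow_diag_eq_diag_mat lam_pow_diag_neg_eq_diag_mat diag_mat_mult powr_minus
  using assms by (simp add: mat_eq_diag_mat)

lemma invertible_lam_pow_diag: "lam \<noteq> 0 \<Longrightarrow> invertible (lam_pow_diag lam a s)"
  unfolding invertible_def using lam_pow_diag_mult_neg lam_pow_diag_neg_mult by blast

lemma invertible_lam_pow_diag_neg: "lam \<noteq> 0 \<Longrightarrow> invertible (lam_pow_diag_neg lam a s)"
  unfolding invertible_def using lam_pow_diag_mult_neg lam_pow_diag_neg_mult by blast

lemma gauge_eq_sandwich:
  "gauge lam a b F x = op_sandwich (lam_pow_diag lam a) (lam_pow_diag_neg lam b) (F (xscale lam x))"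
  by (simp add: gauge_def op_sandwich_eq_op_mult)

lemma xscale_Tq: "xscale lam (Tq q n k x) = Tq q n k (xscale lam x)"
  by (auto simp: xscale_def Tq_def fun_eq_iff)

definition op_Imat_Lam :: "'n::finite \<Rightarrow> nat \<Rightarrow> 'n mop" where
  "op_Imat_Lam k n = op_mult (op_mul_fun (\<lambda>_. Imat k)) (op_Lam (int n))"

lemma op_Imat_Lam_apply: "op_Imat_Lam k n j s = (if j = int n then Imat k else 0)"
  by (simp add: op_Imat_Lam_def op_mult_mul_fun_left op_Lam_def)

lemma mat_power_mult_lam_pow_diag_neg:
  assumes "lam \<noteq> 0"
  shows "mat (lam ^ n) ** lam_pow_diag_neg lam a (s + int n) = lam_pow_diag_neg lam a s"
proof -
  have "lam powr (of_int (s + int n) + a $ i) = lam powr (of_int s + a $ i) * lam ^ n" for i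
    using assms by (simp add: powr_add powr_nat')
  then show ?thesis
    unfolding lam_pow_diag_neg_eq_diag_mat powr_minus mat_eq_diag_mat diag_mat_mult
    using assms by simp (intro arg_cong[where f = diag_mat] ext; simp add: field_simps)
qed

lemma op_Imat_Lam_sandwich:
  assumes "lam \<noteq> 0"
  shows "op_sandwich (lam_pow_diag lam a) (\<lambda>t. mat (lam ^ n) ** lam_pow_diag_neg lam a t) (op_Imat_Lam k n)
    = op_Imat_Lam k n"
proof -
  have "lam_pow_diag lam a s ** Imat k ** (mat (lam ^ n) ** lam_pow_diag_neg lam a (s + int n)) = Imat k" for s
  proof -
    have "Imat k = diag_mat (\<lambda>i. if i = k then 1 else 0)"
      by (simp add: Imat_def diag_mat_def vec_eq_iff)
    then show ?thesis
      unfolding mat_power_mult_lam_pow_diag_neg[OF assms]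
      unfolding lam_pow_diag_eq_diag_mat lam_pow_diag_neg_eq_diag_mat powr_minus
      using assms by (simp add: diag_mat_mult) (intro arg_cong[where f = diag_mat] ext; simp)
  qed
  then show ?thesis
    by (simp add: op_sandwich_def op_Imat_Lam_apply fun_eq_iff)
qed

lemma op_mult_sandwich_Imat_Lam:
  assumes "lam \<noteq> 0"
  shows "op_mult (op_sandwich (lam_pow_diag lam a) (lam_pow_diag_neg lam b) A) (op_Imat_Lam k n)
    = op_sandwich (\<lambda>s. mat (lam ^ n) ** lam_pow_diag lam a s) (lam_pow_diag_neg lam b)
        (op_mult A (op_Imat_Lam k n))"
proof -
  have "op_mult (op_sandwich (lam_pow_diag lam a) (lam_pow_diag_neg lam b) A) (op_Imat_Lam k n)
    = op_mult (op_sandwich (lam_pow_diag lam a) (lam_pow_diag_neg lam b) A)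
        (op_sandwich (lam_pow_diag lam b) (\<lambda>t. mat (lam ^ n) ** lam_pow_diag_neg lam b t) (op_Imat_Lam k n))"
    unfolding op_Imat_Lam_sandwich[OF assms] ..
  also have "\<dots> = op_sandwich (lam_pow_diag lam a) (\<lambda>t. mat (lam ^ n) ** lam_pow_diag_neg lam b t)
      (op_mult A (op_Imat_Lam k n))"
    using assms by (intro op_sandwich_mult) (simp_all add: invertible_mult invertible_mat
        invertible_lam_pow_diag invertible_lam_pow_diag_neg lam_pow_diag_neg_mult)
  finally show ?thesis
    unfolding op_sandwich_scalar .
qed

lemma Dq_gauge:
  assumes "lam \<noteq> 0"
  shows "Dq q n k (gauge lam a b F) x
    = op_sandwich (\<lambda>s. mat (lam ^ n) ** lam_pow_diag lam a s) (lam_pow_diag_neg lam b)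
        (Dq q n k F (xscale lam x))"
proof (intro ext)
  fix j s
  define y where "y = xscale lam x"
  define D where "D = F y j s - F (Tq q n k y) j s"
  define P where "P = lam_pow_diag lam a s"
  define N where "N = lam_pow_diag_neg lam b (s + j)"
  have "1 / x n k = lam ^ n * (1 / y n k)"
    using assms by (simp add: y_def xscale_def)
  then have "Dq q n k (gauge lam a b F) x j s = mat (lam ^ n) ** mat (1 / y n k) ** (P ** D ** N)"
    by (simp add: Dq_def gauge_eq_sandwich xscale_Tq op_sandwich_def mat_mult_mat matrix_diff_ldistrib
        matrix_diff_rdistrib y_def D_def P_def N_def)
  also have "\<dots> = mat (lam ^ n) ** (mat (1 / y n k) ** P) ** D ** N"
    by (simp add: matrix_mul_assoc)
  also have "\<dots> = mat (lam ^ n) ** P ** (mat (1 / y n k) ** D) ** N"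
    by (simp add: mat_mult_commute[of "1 / y n k" P] matrix_mul_assoc)
  finally show "Dq q n k (gauge lam a b F) x j s
    = op_sandwich (\<lambda>s. mat (lam ^ n) ** lam_pow_diag lam a s) (lam_pow_diag_neg lam b)
        (Dq q n k F (xscale lam x)) j s"
    by (simp add: op_sandwich_def Dq_def y_def D_def P_def N_def)
qed

definition sato_rhs :: "complex \<Rightarrow> nat \<Rightarrow> 'n::finite \<Rightarrow> ('n xvars \<Rightarrow> 'n mop) \<Rightarrow> ('n xvars \<Rightarrow> 'n mop) \<Rightarrow> 'n xvars \<Rightarrow> 'n mop" where
  "sato_rhs q n k W Wt x =
     op_mult (op_pos (op_mult (op_mult (W (Tq q n k x)) (op_Imat_Lam k n)) (op_inv (W x)))) (Wt x)
     - op_mult (Wt (Tq q n k x)) (op_Imat_Lam k n)"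

lemma qsato_solution_iff:
  "qsato_solution q W Wb \<longleftrightarrow>
     (\<forall>x. lower_unitriangular (W x)) \<and>
     (\<forall>x s. (\<forall>j < 0. Wb x j s = 0) \<and> invertible (Wb x 0 s)) \<and>
     (\<forall>n \<ge> 1. \<forall>k x. x n k \<noteq> 0 \<longrightarrow> (\<forall>Wt \<in> {W, Wb}. Dq q n k Wt x = sato_rhs q n k W Wt x))"
  unfolding qsato_solution_def lower_unitriangular_def sato_rhs_def op_Imat_Lam_def fun_diff_def
  by (intro conj_cong refl) (auto simp: lower_unitriangular_def)

lemma sato_rhs_gauge:
  assumes lam: "lam \<noteq> 0" and W: "lower_unitriangular (W (xscale lam x))"
  shows "sato_rhs q n k (gauge lam a a W) (gauge lam a b Wt) x
    = op_sandwich (\<lambda>s. mat (lam ^ n) ** lam_pow_diag lam a s) (lam_pow_diag_neg lam b)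
        (sato_rhs q n k W Wt (xscale lam x))"
proof -
  let ?P = "lam_pow_diag lam a" and ?Na = "lam_pow_diag_neg lam a" and ?Nb = "lam_pow_diag_neg lam b"
    and ?cP = "\<lambda>s. mat (lam ^ n) ** lam_pow_diag lam a s" and ?K = "op_Imat_Lam k n"
  define y where "y = xscale lam x"
  have inv: "invertible (?cP t)" "invertible (?Na t)" "invertible (?Nb t)" for t
    using lam by (simp_all add: invertible_mult invertible_mat invertible_lam_pow_diag invertible_lam_pow_diag_neg)
  have W_inv: "op_inv (op_sandwich ?P ?Na (W y)) = op_sandwich ?P ?Na (op_inv (W y))"
    using W lam by (simp add: op_inv_sandwich lam_pow_diag_mult_neg lam_pow_diag_neg_mult y_def)
  have "op_mult (op_pos (op_mult (op_mult (op_sandwich ?P ?Na (W (Tq q n k y))) ?K) (op_inv (op_sandwich ?P ?Na (W y)))))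
      (op_sandwich ?P ?Nb (Wt y))
    = op_sandwich ?cP ?Nb (op_mult (op_pos (op_mult (op_mult (W (Tq q n k y)) ?K) (op_inv (W y)))) (Wt y))"
    unfolding op_mult_sandwich_Imat_Lam[OF lam] W_inv op_pos_sandwich
      op_sandwich_mult[OF inv(1) lam_pow_diag_neg_mult[OF lam] inv(2)]
    by (rule op_sandwich_mult) (simp_all add: inv lam_pow_diag_neg_mult lam)
  then show ?thesis
    by (simp add: sato_rhs_def gauge_eq_sandwich xscale_Tq op_sandwich_diff op_mult_sandwich_Imat_Lam lam y_def)
qed

theorem proposition1:
  fixes q lam :: complex
    and \<alpha> \<beta> :: "complex^'n::finite"
    and W Wb :: "'n xvars \<Rightarrow> 'n mop"
  assumes "norm q > 1"
    and "lam \<noteq> 0"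
    and "qsato_solution q W Wb"
  shows "qsato_solution q (gauge lam \<alpha> \<alpha> W) (gauge lam \<alpha> \<beta> Wb)"
proof -
  note lam = \<open>lam \<noteq> 0\<close>
  have W: "\<And>x. lower_unitriangular (W x)"
    and Wb: "\<And>x j s. j < 0 \<Longrightarrow> Wb x j s = 0" "\<And>x s. invertible (Wb x 0 s)"
    and sato: "\<And>n k x Wt. 1 \<le> n \<Longrightarrow> x n k \<noteq> 0 \<Longrightarrow> Wt \<in> {W, Wb} \<Longrightarrow> Dq q n k Wt x = sato_rhs q n k W Wt x"
    using \<open>qsato_solution q W Wb\<close> unfolding qsato_solution_iff by blast+
  have gauge_sato: "Dq q n k (gauge lam \<alpha> b F) x = sato_rhs q n k (gauge lam \<alpha> \<alpha> W) (gauge lam \<alpha> b F) x"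
    if "1 \<le> n" "x n k \<noteq> 0" "F \<in> {W, Wb}" for n k x b F
  proof -
    have "xscale lam x n k \<noteq> 0"
      using that lam by (simp add: xscale_def)
    then show ?thesis
      using that by (simp add: Dq_gauge sato_rhs_gauge lam W sato)
  qed
  show ?thesis
    unfolding qsato_solution_iff
  proof (intro conjI allI impI ballI)
    fix x :: "'n xvars" and s j :: int
    show "lower_unitriangular (gauge lam \<alpha> \<alpha> W x)"
      using lam W by (simp add: gauge_eq_sandwich lower_unitriangular_sandwich lam_pow_diag_mult_neg)
    show "gauge lam \<alpha> \<beta> Wb x j s = 0" if "j < 0"
      using that Wb by (simp add: gauge_eq_sandwich op_sandwich_def)
    show "invertible (gauge lam \<alpha> \<beta> Wb x 0 s)"
      using lam Wb by (simp add: gauge_eq_sandwich op_sandwich_def invertible_mult invertible_lam_pow_diag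
          invertible_lam_pow_diag_neg)
  qed (use gauge_sato in auto)
qed

end
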